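(* Let $H$ be a graph on $n$ vertices and let $G=K_{1}\vee H$, where $V(K_1)=\{u\}$. Then $\uparrow^{2}G$ has Laplacian perfect state transfer at time $\frac{\pi}{2}$ between $(0,u)$ and $(1,u)$ if and only if $n$ is odd.
   Context: All graphs are simple, undirected and unweighted. The join $K_1\vee H$ is obtained from $H$ by adding a new vertex $u$ adjacent to all vertices of $H$. The blow-up $\uparrow^{2}G$ has vertex set $\mathbb{Z}_2\times V(G)$, with $(l,a)\sim(m,b)$ iff $a\sim b$ in $G$. A graph with Laplacian $L=D-A$ has Laplacian perfect state transfer between $a,b$ at time $\tau$ if $\exp(i\tau L)\mathbf{e}_a=\gamma\mathbf{e}_b$ for some $\gamma\in\mathbb{C}$. *)

theory Defs
  imports "HOL-Analysis.Analysis"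
begin

definition simple_graph :: "'a set \<Rightarrow> ('a \<Rightarrow> 'a \<Rightarrow> bool) \<Rightarrow> bool" where
  "simple_graph V E \<longleftrightarrow> finite V \<and> (\<forall>x\<in>V. \<forall>y\<in>V. E x y \<longleftrightarrow> E y x) \<and> (\<forall>x\<in>V. \<not> E x x)"

text \<open>Join with K_1: the new vertex u is None, old vertices are Some v.\<close>
definition join_verts :: "'a set \<Rightarrow> 'a option set" where
  "join_verts V = insert None (Some ` V)"

fun join_adj :: "('a \<Rightarrow> 'a \<Rightarrow> bool) \<Rightarrow> 'a option \<Rightarrow> 'a option \<Rightarrow> bool" where
  "join_adj E None None = False"
| "join_adj E None (Some b) = True"
| "join_adj E (Some a) None = True"
| "join_adj E (Some a) (Some b) = E a b"

text \<open>Blow-up by 2: vertex set Z_2 x V, with Z_2 represented as {0,1::nat}.\<close>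
definition blowup_verts :: "'a set \<Rightarrow> (nat \<times> 'a) set" where
  "blowup_verts V = {0, 1} \<times> V"

definition blowup_adj :: "('a \<Rightarrow> 'a \<Rightarrow> bool) \<Rightarrow> nat \<times> 'a \<Rightarrow> nat \<times> 'a \<Rightarrow> bool" where
  "blowup_adj E p q \<longleftrightarrow> E (snd p) (snd q)"

definition degree :: "'a set \<Rightarrow> ('a \<Rightarrow> 'a \<Rightarrow> bool) \<Rightarrow> 'a \<Rightarrow> nat" where
  "degree V E x = card {y \<in> V. E x y}"

definition laplacian :: "'a set \<Rightarrow> ('a \<Rightarrow> 'a \<Rightarrow> bool) \<Rightarrow> ('a \<Rightarrow> complex) \<Rightarrow> ('a \<Rightarrow> complex)" where
  "laplacian V E f = (\<lambda>x. of_nat (degree V E x) * f x - (\<Sum>y\<in>{y \<in> V. E x y}. f y))"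

definition basis_vec :: "'a \<Rightarrow> 'a \<Rightarrow> complex" where
  "basis_vec a = (\<lambda>x. if x = a then 1 else 0)"

definition lap_exp_apply :: "'a set \<Rightarrow> ('a \<Rightarrow> 'a \<Rightarrow> bool) \<Rightarrow> real \<Rightarrow> 'a \<Rightarrow> 'a \<Rightarrow> complex" where
  "lap_exp_apply V E t a x =
     (\<Sum>k. (\<i> * of_real t) ^ k / of_nat (fact k) * ((laplacian V E ^^ k) (basis_vec a)) x)"

definition laplacian_pst :: "'a set \<Rightarrow> ('a \<Rightarrow> 'a \<Rightarrow> bool) \<Rightarrow> 'a \<Rightarrow> 'a \<Rightarrow> real \<Rightarrow> bool" where
  "laplacian_pst V E a b t \<longleftrightarrow>
     (\<exists>\<gamma>::complex. \<forall>x\<in>V. lap_exp_apply V E t a x = \<gamma> * basis_vec b x)"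

end

theory Submission
  imports Defs
begin

(* Vectors on the blow-up that are constant off the two copies (0,u), (1,u) of the apex form an
   L-invariant space on which L does not see H: writing a, b for the values at the copies of u and
   c for the common value elsewhere, L maps (a, b, c) to (2n(a - c), 2n(b - c), 2c - a - b).
   There e_(0,u) splits into eigenvectors for the eigenvalues 2n, 2n + 2 and 0, so at time pi/2
   the phases are (-1)^n, -(-1)^n and 1, and the amplitude left at (0,u) is
   (1 + (-1)^n) / (2n + 2).  It vanishes exactly when n is odd, and then the state sits at (1,u). *)

lemma laplacian_cong:
  assumes "\<And>y. y \<in> V \<Longrightarrow> f y = g y" and "x \<in> V"
  shows "laplacian V E f x = laplacian V E g x"
  using assms unfolding laplacian_def by (auto intro!: sum.cong)

lemma laplacian_add:
  "laplacian V E (\<lambda>x. f x + g x) y = laplacian V E f y + laplacian V E g y"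
  unfolding laplacian_def by (simp add: sum.distrib algebra_simps)

lemma laplacian_mult:
  "laplacian V E (\<lambda>x. c * f x) y = c * laplacian V E f y"
  unfolding laplacian_def by (simp add: sum_distrib_left algebra_simps)

lemma laplacian_sum_list:
  "laplacian V E (\<lambda>x. \<Sum>i\<leftarrow>xs. f i x) y = (\<Sum>i\<leftarrow>xs. laplacian V E (f i) y)"
proof (induction xs)
  case Nil
  show ?case by (simp add: laplacian_def)
next
  case (Cons i xs)
  then show ?case by (simp add: laplacian_add)
qed

lemma sums_sum_list:
  fixes f :: "'i \<Rightarrow> nat \<Rightarrow> 'b::{t2_space, topological_comm_monoid_add}"
  assumes "\<And>i. i \<in> set xs \<Longrightarrow> f i sums s i"
  shows "(\<lambda>k. \<Sum>i\<leftarrow>xs. f i k) sums (\<Sum>i\<leftarrow>xs. s i)"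
  using assms
proof (induction xs)
  case (Cons i xs)
  then have "f i sums s i" and "(\<lambda>k. \<Sum>i\<leftarrow>xs. f i k) sums (\<Sum>i\<leftarrow>xs. s i)"
    by simp_all
  then show ?case by (simp add: sums_add)
qed simp

lemma laplacian_pow_eigen_expansion:
  assumes "\<forall>x\<in>V. f x = (\<Sum>(\<mu>, w)\<leftarrow>ps. w x)"
    and "\<And>\<mu> w x. (\<mu>, w) \<in> set ps \<Longrightarrow> x \<in> V \<Longrightarrow> laplacian V E w x = \<mu> * w x"
  shows "\<forall>x\<in>V. (laplacian V E ^^ k) f x = (\<Sum>(\<mu>, w)\<leftarrow>ps. \<mu> ^ k * w x)"
proof (induction k)
  case 0
  then show ?case using assms(1) by simp
next
  case (Suc k)
  show ?case
  proof
    fix x assume x: "x \<in> V"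
    have "(laplacian V E ^^ Suc k) f x = laplacian V E (\<lambda>y. \<Sum>(\<mu>, w)\<leftarrow>ps. \<mu> ^ k * w y) x"
      using Suc x by (auto intro: laplacian_cong)
    also have "\<dots> = (\<Sum>(\<mu>, w)\<leftarrow>ps. \<mu> ^ k * laplacian V E w x)"
      by (simp add: laplacian_sum_list laplacian_mult case_prod_unfold)
    also have "\<dots> = (\<Sum>(\<mu>, w)\<leftarrow>ps. \<mu> ^ Suc k * w x)"
      using assms(2) x by (intro arg_cong[where f = sum_list] map_cong) auto
    finally show "(laplacian V E ^^ Suc k) f x = (\<Sum>(\<mu>, w)\<leftarrow>ps. \<mu> ^ Suc k * w x)" .
  qed
qed

lemma lap_exp_apply_eigen_expansion:
  assumes "\<forall>x\<in>V. basis_vec a x = (\<Sum>(\<mu>, w)\<leftarrow>ps. w x)"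
    and "\<And>\<mu> w x. (\<mu>, w) \<in> set ps \<Longrightarrow> x \<in> V \<Longrightarrow> laplacian V E w x = \<mu> * w x"
    and "x \<in> V"
  shows "lap_exp_apply V E t a x = (\<Sum>(\<mu>, w)\<leftarrow>ps. exp (\<i> * t * \<mu>) * w x)"
proof -
  have series_term: "(\<i> * t) ^ k / of_nat (fact k) * ((laplacian V E ^^ k) (basis_vec a)) x
      = (\<Sum>(\<mu>, w)\<leftarrow>ps. w x * ((\<i> * t * \<mu>) ^ k /\<^sub>R fact k))" for k
  proof -
    have "(\<i> * t) ^ k / of_nat (fact k) * ((laplacian V E ^^ k) (basis_vec a)) x
        = (\<i> * t) ^ k / of_nat (fact k) * (\<Sum>(\<mu>, w)\<leftarrow>ps. \<mu> ^ k * w x)"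
      using laplacian_pow_eigen_expansion[OF assms(1,2)] assms(3) by simp
    also have "\<dots> = (\<Sum>(\<mu>, w)\<leftarrow>ps. (\<i> * t) ^ k / of_nat (fact k) * (\<mu> ^ k * w x))"
      by (simp only: sum_list_const_mult case_prod_unfold)
    also have "\<dots> = (\<Sum>(\<mu>, w)\<leftarrow>ps. w x * ((\<i> * t * \<mu>) ^ k /\<^sub>R fact k))"
      by (simp add: case_prod_unfold scaleR_conv_of_real power_mult_distrib divide_inverse mult_ac)
    finally show ?thesis .
  qed
  have "(\<lambda>k. \<Sum>(\<mu>, w)\<leftarrow>ps. w x * ((\<i> * t * \<mu>) ^ k /\<^sub>R fact k))
      sums (\<Sum>(\<mu>, w)\<leftarrow>ps. w x * exp (\<i> * t * \<mu>))"
    unfolding case_prod_unfold by (intro sums_sum_list sums_mult exp_converges)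
  then show ?thesis
    unfolding lap_exp_apply_def series_term by (simp add: sums_iff mult.commute)
qed

definition cone_vec :: "complex \<Rightarrow> complex \<Rightarrow> complex \<Rightarrow> nat \<times> 'a option \<Rightarrow> complex" where
  "cone_vec a b c = (\<lambda>(l, w). case w of None \<Rightarrow> if l = 0 then a else b | Some _ \<Rightarrow> c)"

lemma blowup_join_neighbours_apex:
  "{y \<in> blowup_verts (join_verts V). blowup_adj (join_adj E) (l, None) y} = {0, 1} \<times> Some ` V"
  unfolding blowup_verts_def join_verts_def blowup_adj_def
  by (auto elim: join_adj.elims)

lemma blowup_join_neighbours_base:
  "{y \<in> blowup_verts (join_verts V). blowup_adj (join_adj E) (l, Some v) y}
     = {(0, None), (1, None)} \<union> {0, 1} \<times> Some ` {w \<in> V. E v w}"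
  unfolding blowup_verts_def join_verts_def blowup_adj_def
  by (auto elim: join_adj.elims)

(* The edges of H add equally to the degree of (l, v) and to its neighbour sum, so they cancel. *)
lemma laplacian_cone_vec:
  fixes a b c :: complex
  assumes "finite V" and "x \<in> blowup_verts (join_verts V)"
  shows "laplacian (blowup_verts (join_verts V)) (blowup_adj (join_adj E)) (cone_vec a b c) x
       = cone_vec (2 * of_nat (card V) * (a - c)) (2 * of_nat (card V) * (b - c)) (2 * c - a - b) x"
proof -
  obtain l w where x: "x = (l, w)" and l: "l \<in> {0, 1}"
    using assms(2) unfolding blowup_verts_def by auto
  show ?thesis
  proof (cases w)
    case None
    have "card ({0::nat, 1} \<times> Some ` V) = 2 * card V"
      by (simp add: card_cartesian_product card_image)
    moreover have "(\<Sum>y\<in>{0::nat, 1} \<times> Some ` V. cone_vec a b c y) = (\<Sum>y\<in>{0::nat, 1} \<times> Some ` V. c)"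
      by (rule sum.cong) (auto simp: cone_vec_def)
    ultimately show ?thesis
      using l unfolding laplacian_def degree_def x None blowup_join_neighbours_apex
      by (auto simp: cone_vec_def algebra_simps)
  next
    case (Some v)
    let ?S = "{w \<in> V. E v w}"
    let ?A = "{(0::nat, None), (1, None)}" and ?B = "{0::nat, 1} \<times> Some ` ?S"
    have fin: "finite ?A" "finite ?B" and disj: "?A \<inter> ?B = {}"
      using assms(1) by auto
    have card_B: "card ?B = 2 * card ?S"
      by (simp add: card_cartesian_product card_image)
    have card: "card (?A \<union> ?B) = 2 + 2 * card ?S"
      using fin disj card_B by (simp add: card_Un_disjoint)
    have "(\<Sum>y\<in>?B. cone_vec a b c y) = (\<Sum>y\<in>?B. c)"
      by (rule sum.cong) (auto simp: cone_vec_def)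
    then have "(\<Sum>y\<in>?A \<union> ?B. cone_vec a b c y) = a + b + of_nat (2 * card ?S) * c"
      using fin disj card_B by (simp add: sum.union_disjoint cone_vec_def)
    with card show ?thesis
      unfolding laplacian_def degree_def x Some blowup_join_neighbours_base
      by (simp add: cone_vec_def algebra_simps)
  qed
qed

lemma two_mult_of_nat_add_two_neq_zero [simp]:
  "2 * of_nat m + 2 \<noteq> (0 :: 'a::semiring_char_0)"
proof -
  have "2 * of_nat m + 2 = (of_nat (2 * m + 2) :: 'a)"
    by (metis of_nat_add of_nat_mult of_nat_numeral)
  then show ?thesis
    by (simp only: of_nat_eq_0_iff)
qed

lemma lap_exp_apply_blowup_join:
  fixes t :: real
  assumes "finite V" and "x \<in> blowup_verts (join_verts V)"
  defines "n \<equiv> of_nat (card V) :: complex"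
  defines "r \<equiv> 1 / (2 * n + 2)"
  defines "p \<equiv> exp (\<i> * t * (2 * n))" and "q \<equiv> exp (\<i> * t * (2 * n + 2))"
  shows "lap_exp_apply (blowup_verts (join_verts V)) (blowup_adj (join_adj E)) t (0, None) x
       = cone_vec (p / 2 + r * n * q + r) (- p / 2 + r * n * q + r) (r - r * q) x"
proof -
  let ?V = "blowup_verts (join_verts V)" and ?E = "blowup_adj (join_adj E)"
  let ?ps = "[(2 * n, cone_vec (1/2) (- 1/2) 0), (2 * n + 2, \<lambda>y. r * cone_vec n n (- 1) y),
              (0, \<lambda>y. r * cone_vec 1 1 1 y)]"
  have r: "r * (2 * n + 2) = 1"
    by (simp add: r_def n_def)
  have "\<forall>y\<in>?V. basis_vec (0, None) y = (\<Sum>(\<mu>, w)\<leftarrow>?ps. w y)"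
    using r by (auto simp: blowup_verts_def basis_vec_def cone_vec_def split: option.split; algebra)
  moreover have "laplacian ?V ?E w y = \<mu> * w y" if "(\<mu>, w) \<in> set ?ps" and "y \<in> ?V" for \<mu> w y
    using that by (auto simp: laplacian_mult laplacian_cone_vec[OF assms(1)] n_def[symmetric])
      (auto simp: cone_vec_def algebra_simps split: prod.splits option.splits)
  ultimately have "lap_exp_apply ?V ?E t (0, None) x = (\<Sum>(\<mu>, w)\<leftarrow>?ps. exp (\<i> * t * \<mu>) * w x)"
    using assms(2) by (rule lap_exp_apply_eigen_expansion)
  then show ?thesis
    by (simp add: p_def q_def cone_vec_def algebra_simps split: prod.split option.split)
qed

lemma lap_exp_apply_blowup_join_half_pi:
  assumes "finite V" and "x \<in> blowup_verts (join_verts V)"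
  defines "s \<equiv> (- 1 :: complex) ^ card V"
  defines "a \<equiv> (1 + s) / (2 * of_nat (card V) + 2)"
  shows "lap_exp_apply (blowup_verts (join_verts V)) (blowup_adj (join_adj E)) (pi / 2) (0, None) x
       = cone_vec a (a - s) a x"
proof -
  define n where "n = (of_nat (card V) :: complex)"
  define r where "r = 1 / (2 * n + 2)"
  have r: "r * (2 * n + 2) = 1" and a: "a = r * (1 + s)"
    by (simp_all add: r_def n_def a_def)
  have "\<i> * of_real (pi / 2) * (2 * n) = of_nat (card V) * (\<i> * of_real pi)"
    by (simp add: n_def field_simps)
  then have phase1: "exp (\<i> * of_real (pi / 2) * (2 * n)) = s"
    by (simp only: exp_of_nat_mult exp_pi_i' s_def)
  have "\<i> * of_real (pi / 2) * (2 * n + 2) = of_nat (Suc (card V)) * (\<i> * of_real pi)"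
    by (simp add: n_def field_simps)
  then have phase2: "exp (\<i> * of_real (pi / 2) * (2 * n + 2)) = - s"
    by (simp only: exp_of_nat_mult exp_pi_i' s_def power_Suc) simp
  have "s / 2 + r * n * - s + r = a" and "- s / 2 + r * n * - s + r = a - s"
    using r unfolding a by algebra+
  moreover have "r - r * - s = a"
    unfolding a by (simp add: algebra_simps)
  ultimately show ?thesis
    unfolding lap_exp_apply_blowup_join[OF assms(1,2)] n_def[symmetric] r_def[symmetric] phase1 phase2
    by (simp only:)
qed

lemma cone_vec_eq_basis_vec_iff:
  "(\<exists>\<gamma>. \<forall>x\<in>blowup_verts (join_verts V). cone_vec a b a x = \<gamma> * basis_vec (1, None) x)
     \<longleftrightarrow> a = 0"
proof
  assume "\<exists>\<gamma>. \<forall>x\<in>blowup_verts (join_verts V). cone_vec a b a x = \<gamma> * basis_vec (1, None) x"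
  moreover have "(0, None) \<in> blowup_verts (join_verts V)"
    by (simp add: blowup_verts_def join_verts_def)
  ultimately show "a = 0"
    by (force simp: cone_vec_def basis_vec_def)
next
  assume "a = 0"
  then have "\<forall>x\<in>blowup_verts (join_verts V). cone_vec a b a x = b * basis_vec (1, None) x"
    by (auto simp: blowup_verts_def cone_vec_def basis_vec_def split: option.split)
  then show "\<exists>\<gamma>. \<forall>x\<in>blowup_verts (join_verts V). cone_vec a b a x = \<gamma> * basis_vec (1, None) x" ..
qed

theorem corollary10:
  fixes V :: "'a set" and E :: "'a \<Rightarrow> 'a \<Rightarrow> bool"
  assumes "simple_graph V E"
  shows "laplacian_pst (blowup_verts (join_verts V)) (blowup_adj (join_adj E))
           (0, None) (1, None) (pi / 2)
         \<longleftrightarrow> odd (card V)"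
proof -
  define s where "s = (- 1 :: complex) ^ card V"
  define a where "a = (1 + s) / (2 * of_nat (card V) + 2)"
  have "finite V"
    using assms by (simp add: simple_graph_def)
  then have "laplacian_pst (blowup_verts (join_verts V)) (blowup_adj (join_adj E))
           (0, None) (1, None) (pi / 2)
      \<longleftrightarrow> (\<exists>\<gamma>. \<forall>x\<in>blowup_verts (join_verts V). cone_vec a (a - s) a x = \<gamma> * basis_vec (1, None) x)"
    by (simp add: laplacian_pst_def lap_exp_apply_blowup_join_half_pi s_def a_def)
  also have "\<dots> \<longleftrightarrow> a = 0"
    by (rule cone_vec_eq_basis_vec_iff)
  also have "\<dots> \<longleftrightarrow> s = - 1"
    by (simp add: a_def add_eq_0_iff[of 1])
  also have "\<dots> \<longleftrightarrow> odd (card V)"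
    by (simp add: s_def minus_one_power_iff)
  finally show ?thesis .
qed

end
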